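(* Let $G=\langle X\mid\mathcal R\rangle$ be a group, $A,B\le G$ subgroups and $\phi:A\to B$ an isomorphism, and let $H=\langle X\cup\{t\}\mid\mathcal R,\ t^{-1}at=\phi(a)\ (a\in A)\rangle$ be the HNN-extension. Suppose $g_1\in G$ is not a proper power of any element of $G$. Then the image of $g_1$ in $H$ is a proper power in $H$ if and only if there exist $k\ge2$ and $g_2\in G$ such that $g_1$ is conjugate to $g_2^k$ in $H$.
   Context: An element $g$ of a group $K$ is a proper power in $K$ if $g=h^k$ for some $h\in K$ and some integer $k\ge2$. *)

theory Defs
  imports "HOL-Algebra.Algebra"
begin

text \<open>Concrete construction of the HNN-extension
  H = < G, t | t^-1 a t = phi(a) (a in A) > as a quotient of the free monoid on
  letters.  A letter is (Some g, e) for g in G or (None, e) for the stable letter t;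
  the flag e = True means the formal inverse of the letter.  G is presented by its
  multiplication table (equivalent to any presentation of G).\<close>

type_synonym 'g hnn_letter = "'g option \<times> bool"
type_synonym 'g hnn_word = "'g hnn_letter list"

definition hnn_words :: "('g, 'b) monoid_scheme \<Rightarrow> 'g hnn_word set" where
  "hnn_words G = {w. \<forall>l \<in> set w. \<forall>g. fst l = Some g \<longrightarrow> g \<in> carrier G}"

inductive_set hnn_rel :: "('g, 'b) monoid_scheme \<Rightarrow> 'g set \<Rightarrow> ('g \<Rightarrow> 'g)
    \<Rightarrow> ('g hnn_word \<times> 'g hnn_word) set"
  for G :: "('g, 'b) monoid_scheme" and A :: "'g set" and \<phi> :: "'g \<Rightarrow> 'g" where
  refl: "w \<in> hnn_words G \<Longrightarrow> (w, w) \<in> hnn_rel G A \<phi>"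
| sym: "(u, v) \<in> hnn_rel G A \<phi> \<Longrightarrow> (v, u) \<in> hnn_rel G A \<phi>"
| trans: "(u, v) \<in> hnn_rel G A \<phi> \<Longrightarrow> (v, w) \<in> hnn_rel G A \<phi> \<Longrightarrow> (u, w) \<in> hnn_rel G A \<phi>"
| ctxt: "(u, v) \<in> hnn_rel G A \<phi> \<Longrightarrow> x \<in> hnn_words G \<Longrightarrow> y \<in> hnn_words G
          \<Longrightarrow> (x @ u @ y, x @ v @ y) \<in> hnn_rel G A \<phi>"
| free: "[(s, e)] \<in> hnn_words G \<Longrightarrow> ([(s, e), (s, \<not> e)], []) \<in> hnn_rel G A \<phi>"
| gmult: "g \<in> carrier G \<Longrightarrow> h \<in> carrier G
          \<Longrightarrow> ([(Some g, False), (Some h, False)], [(Some (g \<otimes>\<^bsub>G\<^esub> h), False)]) \<in> hnn_rel G A \<phi>"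
| gone: "([(Some \<one>\<^bsub>G\<^esub>, False)], []) \<in> hnn_rel G A \<phi>"
| conj: "a \<in> A \<Longrightarrow> ([(None, True), (Some a, False), (None, False)], [(Some (\<phi> a), False)])
          \<in> hnn_rel G A \<phi>"

definition hnn_ext :: "('g, 'b) monoid_scheme \<Rightarrow> 'g set \<Rightarrow> ('g \<Rightarrow> 'g)
    \<Rightarrow> 'g hnn_word set monoid" where
  "hnn_ext G A \<phi> =
     \<lparr> carrier = hnn_words G // hnn_rel G A \<phi>,
       monoid.mult = (\<lambda>U V. \<Union>u\<in>U. \<Union>v\<in>V. hnn_rel G A \<phi> `` {u @ v}),
       monoid.one = hnn_rel G A \<phi> `` {[]} \<rparr>"

definition hnn_inc :: "('g, 'b) monoid_scheme \<Rightarrow> 'g set \<Rightarrow> ('g \<Rightarrow> 'g) \<Rightarrow> 'g \<Rightarrow> 'g hnn_word set" where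
  "hnn_inc G A \<phi> g = hnn_rel G A \<phi> `` {[(Some g, False)]}"

definition hnn_t :: "('g, 'b) monoid_scheme \<Rightarrow> 'g set \<Rightarrow> ('g \<Rightarrow> 'g) \<Rightarrow> 'g hnn_word set" where
  "hnn_t G A \<phi> = hnn_rel G A \<phi> `` {[(None, False)]}"

definition proper_power :: "('a, 'b) monoid_scheme \<Rightarrow> 'a \<Rightarrow> bool" where
  "proper_power K g \<longleftrightarrow> (\<exists>h\<in>carrier K. \<exists>k::int. k \<ge> 2 \<and> g = h [^]\<^bsub>K\<^esub> k)"

end

(*
  If h^k = g1 with h in H, then h is conjugate into G: a root of an element conjugate into G is
  itself conjugate into G. Van der Waerden's action of H on transversal normal forms gives
  Britton's lemma and a length |h|, the number of stable letters in the normal form of h. An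
  element of positive length is conjugate either to a shorter element or to a cyclically reduced
  word L; in the latter case its N-th power has length N |L|, whereas an element x^-1 g x with g
  in G has length at most 2 |x|, so no power of it is conjugate into G. Induction on the length
  finishes the argument; the converse direction is immediate.
*)

theory Submission
  imports Defs
begin

context group
begin

lemma inv_mult_cancel_left [simp]:
  "x \<in> carrier G \<Longrightarrow> y \<in> carrier G \<Longrightarrow> inv x \<otimes> (x \<otimes> y) = y"
  by (simp add: m_assoc[symmetric])

lemma mult_inv_cancel_left [simp]:
  "x \<in> carrier G \<Longrightarrow> y \<in> carrier G \<Longrightarrow> x \<otimes> (inv x \<otimes> y) = y"
  by (simp add: m_assoc[symmetric])

lemma conj_nat_pow:
  assumes a: "a \<in> carrier G" and z: "z \<in> carrier G"
  shows "(inv z \<otimes> a \<otimes> z) [^] (n::nat) = inv z \<otimes> a [^] n \<otimes> z"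
proof (induction n)
  case (Suc n)
  have "(inv z \<otimes> a \<otimes> z) [^] Suc n = inv z \<otimes> a [^] n \<otimes> z \<otimes> (inv z \<otimes> a \<otimes> z)"
    using Suc by simp
  also have "\<dots> = inv z \<otimes> (a [^] n \<otimes> a) \<otimes> z"
    using a z by (simp add: m_assoc)
  finally show ?case
    by simp
qed (use z in simp)

lemma conj_mult:
  assumes "h \<in> carrier G" and "x \<in> carrier G" and "y \<in> carrier G"
  shows "inv (x \<otimes> y) \<otimes> h \<otimes> (x \<otimes> y) = inv y \<otimes> (inv x \<otimes> h \<otimes> x) \<otimes> y"
  using assms by (simp add: inv_mult_group m_assoc)

lemma subgroup_mult_left_mem_iff:
  assumes "subgroup T G" and "d \<in> T" and "x \<in> carrier G"
  shows "d \<otimes> x \<in> T \<longleftrightarrow> x \<in> T"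
proof
  assume "d \<otimes> x \<in> T"
  then have "inv d \<otimes> (d \<otimes> x) \<in> T"
    using subgroup.m_closed[OF assms(1) subgroup.m_inv_closed[OF assms(1,2)]] by blast
  then show "x \<in> T"
    using subgroup.mem_carrier[OF assms(1,2)] assms(3) by simp
next
  assume "x \<in> T"
  then show "d \<otimes> x \<in> T"
    by (rule subgroup.m_closed[OF assms(1,2)])
qed

text \<open>The choice predicate depends only on the right coset \<open>T g\<close>, so \<open>coset_rep T\<close> is a
  transversal (\<open>coset_rep_cong\<close>).\<close>

definition coset_rep :: "'a set \<Rightarrow> 'a \<Rightarrow> 'a" where
  "coset_rep T g = (SOME c. c \<in> carrier G \<and> g \<otimes> inv c \<in> T \<and> (g \<in> T \<longrightarrow> c = \<one>))"

lemma coset_rep_spec: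
  assumes T: "subgroup T G" and g: "g \<in> carrier G"
  shows "coset_rep T g \<in> carrier G \<and> g \<otimes> inv (coset_rep T g) \<in> T \<and> (g \<in> T \<longrightarrow> coset_rep T g = \<one>)"
proof -
  have "\<exists>c. c \<in> carrier G \<and> g \<otimes> inv c \<in> T \<and> (g \<in> T \<longrightarrow> c = \<one>)"
  proof (cases "g \<in> T")
    case False
    then show ?thesis
      using g subgroup.one_closed[OF T] by (intro exI[of _ g]) simp
  qed (use g in simp)
  then show ?thesis
    unfolding coset_rep_def by (rule someI_ex)
qed

lemma coset_rep_closed: "subgroup T G \<Longrightarrow> g \<in> carrier G \<Longrightarrow> coset_rep T g \<in> carrier G"
  using coset_rep_spec by blast

lemma coset_rep_quotient: "subgroup T G \<Longrightarrow> g \<in> carrier G \<Longrightarrow> g \<otimes> inv (coset_rep T g) \<in> T"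
  using coset_rep_spec by blast

lemma coset_rep_eq_one_iff:
  assumes "subgroup T G" and "g \<in> carrier G"
  shows "coset_rep T g = \<one> \<longleftrightarrow> g \<in> T"
  using coset_rep_spec[OF assms] assms(2) by auto

lemma coset_rep_cong:
  assumes T: "subgroup T G" and g: "g \<in> carrier G" and g': "g' \<in> carrier G"
    and d: "g' \<otimes> inv g \<in> T"
  shows "coset_rep T g' = coset_rep T g"
proof -
  have shift: "g' \<otimes> x \<in> T \<longleftrightarrow> g \<otimes> x \<in> T" if "x \<in> carrier G" for x
  proof -
    have "g' \<otimes> x = (g' \<otimes> inv g) \<otimes> (g \<otimes> x)"
      using g g' that by (simp add: m_assoc[symmetric]) (simp add: m_assoc)
    then show ?thesis
      using subgroup_mult_left_mem_iff[OF T d] g that by simp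
  qed
  have "g' \<in> T \<longleftrightarrow> g \<in> T"
    using shift[of \<one>] g g' by simp
  then have "(\<lambda>c. c \<in> carrier G \<and> g' \<otimes> inv c \<in> T \<and> (g' \<in> T \<longrightarrow> c = \<one>))
      = (\<lambda>c. c \<in> carrier G \<and> g \<otimes> inv c \<in> T \<and> (g \<in> T \<longrightarrow> c = \<one>))"
    using shift by (intro ext) auto
  then show ?thesis
    unfolding coset_rep_def by simp
qed

lemma coset_rep_idem:
  assumes T: "subgroup T G" and g: "g \<in> carrier G"
  shows "coset_rep T (coset_rep T g) = coset_rep T g"
proof -
  have c: "coset_rep T g \<in> carrier G"
    using coset_rep_closed[OF T g] .
  have "coset_rep T g \<otimes> inv g = inv (g \<otimes> inv (coset_rep T g))"
    using g c by (simp add: inv_mult_group)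
  also have "\<dots> \<in> T"
    using subgroup.m_inv_closed[OF T coset_rep_quotient[OF T g]] .
  finally show ?thesis
    using coset_rep_cong[OF T g c] by simp
qed

lemma coset_rep_mult_left:
  assumes T: "subgroup T G" and g: "g \<in> carrier G" and s: "s \<in> T"
  shows "coset_rep T (s \<otimes> g) = coset_rep T g"
proof -
  have "s \<in> carrier G"
    using subgroup.mem_carrier[OF T s] .
  then show ?thesis
    using coset_rep_cong[OF T g _ ] g s by (simp add: m_assoc)
qed

end

subsection \<open>The HNN-extension is a group\<close>

locale hnn_extension = group G for G :: "('g, 'b) monoid_scheme" (structure) +
  fixes A B :: "'g set" and \<phi> :: "'g \<Rightarrow> 'g"
  assumes subgroup_A: "subgroup A G" and subgroup_B: "subgroup B G"
    and \<phi>_iso: "\<phi> \<in> iso (G\<lparr>carrier := A\<rparr>) (G\<lparr>carrier := B\<rparr>)"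
begin

abbreviation "H \<equiv> hnn_ext G A \<phi>"
abbreviation "W \<equiv> hnn_words G"
abbreviation "R \<equiv> hnn_rel G A \<phi>"
abbreviation "inc \<equiv> hnn_inc G A \<phi>"

definition word_class :: "'g hnn_word \<Rightarrow> 'g hnn_word set" where
  "word_class w = R `` {w}"

lemma hnn_words_Cons [simp]:
  "l # w \<in> W \<longleftrightarrow> (\<forall>g. fst l = Some g \<longrightarrow> g \<in> carrier G) \<and> w \<in> W"
  by (auto simp: hnn_words_def)

lemma hnn_words_Nil [simp]: "[] \<in> W"
  by (auto simp: hnn_words_def)

lemma hnn_words_append [simp]: "u @ v \<in> W \<longleftrightarrow> u \<in> W \<and> v \<in> W"
  by (auto simp: hnn_words_def)

lemma A_subset: "A \<subseteq> carrier G"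
  using subgroup_A subgroup.subset by blast

lemma \<phi>_bij: "bij_betw \<phi> A B"
  using \<phi>_iso by (simp add: iso_def)

lemma \<phi>_closed: "a \<in> A \<Longrightarrow> \<phi> a \<in> carrier G"
  using \<phi>_bij subgroup.subset[OF subgroup_B] by (auto simp: bij_betw_def)

lemma hnn_rel_words: "(u, v) \<in> R \<Longrightarrow> u \<in> W \<and> v \<in> W"
  by (induction rule: hnn_rel.induct) (use A_subset \<phi>_closed in auto)

lemma equiv_hnn_rel: "equiv W R"
  unfolding equiv_def refl_on_def sym_def trans_def
  using hnn_rel_words hnn_rel.refl hnn_rel.sym hnn_rel.trans by (metis subrelI mem_Sigma_iff)

lemma hnn_rel_append: "(u, u') \<in> R \<Longrightarrow> (v, v') \<in> R \<Longrightarrow> (u @ v, u' @ v') \<in> R"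
proof -
  assume uu': "(u, u') \<in> R" and vv': "(v, v') \<in> R"
  have "([] @ u @ v, [] @ u' @ v) \<in> R"
    using hnn_rel_words[OF vv'] by (intro hnn_rel.ctxt[OF uu']) simp_all
  moreover have "(u' @ v @ [], u' @ v' @ []) \<in> R"
    using hnn_rel_words[OF uu'] by (intro hnn_rel.ctxt[OF vv']) simp_all
  ultimately show ?thesis
    using hnn_rel.trans[of "u @ v" "u' @ v"] by simp
qed

lemma word_class_eq: "(u, v) \<in> R \<Longrightarrow> word_class u = word_class v"
  unfolding word_class_def using equiv_hnn_rel by (simp add: equiv_class_eq)

lemma word_class_eq_iff: "u \<in> W \<Longrightarrow> v \<in> W \<Longrightarrow> word_class u = word_class v \<longleftrightarrow> (u, v) \<in> R"
  unfolding word_class_def using equiv_hnn_rel by (simp add: eq_equiv_class_iff)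

lemma carrier_hnn: "carrier H = word_class ` W"
  by (auto simp: hnn_ext_def quotient_def word_class_def)

lemma one_hnn: "\<one>\<^bsub>H\<^esub> = word_class []"
  by (simp add: hnn_ext_def word_class_def)

lemma mult_hnn:
  assumes u: "u \<in> W" and v: "v \<in> W"
  shows "word_class u \<otimes>\<^bsub>H\<^esub> word_class v = word_class (u @ v)"
proof -
  have "R `` {u' @ v'} = word_class (u @ v)" if "u' \<in> word_class u" "v' \<in> word_class v" for u' v'
  proof -
    have "(u @ v, u' @ v') \<in> R"
      using that by (intro hnn_rel_append) (simp_all add: word_class_def)
    then show ?thesis
      using word_class_eq[OF hnn_rel.sym] by (simp add: word_class_def)
  qed
  moreover have "u \<in> word_class u" "v \<in> word_class v"
    using u v by (auto simp: word_class_def intro: hnn_rel.refl)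
  moreover have "word_class u \<otimes>\<^bsub>H\<^esub> word_class v
      = (\<Union>u'\<in>word_class u. \<Union>v'\<in>word_class v. R `` {u' @ v'})"
    by (simp add: hnn_ext_def word_class_def)
  ultimately show ?thesis
    by blast
qed

definition word_inv :: "'g hnn_word \<Rightarrow> 'g hnn_word" where
  "word_inv w = rev (map (\<lambda>(s, e). (s, \<not> e)) w)"

lemma word_inv_words [simp]: "word_inv w \<in> W \<longleftrightarrow> w \<in> W"
  by (auto simp: word_inv_def hnn_words_def)

lemma word_inv_cancel: "w \<in> W \<Longrightarrow> (word_inv w @ w, []) \<in> R"
proof (induction w)
  case Nil
  then show ?case by (simp add: word_inv_def hnn_rel.refl)
next
  case (Cons l w)
  obtain s e where l: "l = (s, e)" by (cases l)
  have "([(s, \<not> e), (s, \<not> \<not> e)], []) \<in> R"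
    using Cons.prems l by (intro hnn_rel.free) (auto simp: hnn_words_def)
  from hnn_rel.ctxt[OF this, of "word_inv w" w]
  have step: "(word_inv w @ [(s, \<not> e), (s, e)] @ w, word_inv w @ w) \<in> R"
    using Cons.prems by simp
  have "word_inv (l # w) @ l # w = word_inv w @ [(s, \<not> e), (s, e)] @ w"
    by (simp add: word_inv_def l)
  then show ?case
    using Cons.prems by (simp only:) (rule hnn_rel.trans[OF step Cons.IH], simp)
qed

lemma group_hnn: "group H"
proof (rule groupI)
  fix x y assume "x \<in> carrier H" "y \<in> carrier H"
  then show "x \<otimes>\<^bsub>H\<^esub> y \<in> carrier H"
    by (auto simp: carrier_hnn mult_hnn)
next
  show "\<one>\<^bsub>H\<^esub> \<in> carrier H"
    by (auto simp: carrier_hnn one_hnn)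
next
  fix x y z assume "x \<in> carrier H" "y \<in> carrier H" "z \<in> carrier H"
  then show "x \<otimes>\<^bsub>H\<^esub> y \<otimes>\<^bsub>H\<^esub> z = x \<otimes>\<^bsub>H\<^esub> (y \<otimes>\<^bsub>H\<^esub> z)"
    by (auto simp: carrier_hnn mult_hnn)
next
  fix x assume "x \<in> carrier H"
  then show "\<one>\<^bsub>H\<^esub> \<otimes>\<^bsub>H\<^esub> x = x"
    by (auto simp: carrier_hnn mult_hnn one_hnn)
next
  fix x assume "x \<in> carrier H"
  then obtain w where "w \<in> W" "x = word_class w"
    by (auto simp: carrier_hnn)
  then show "\<exists>y\<in>carrier H. y \<otimes>\<^bsub>H\<^esub> x = \<one>\<^bsub>H\<^esub>"
    by (intro bexI[of _ "word_class (word_inv w)"])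
      (auto simp: carrier_hnn mult_hnn one_hnn word_inv_cancel word_class_eq)
qed

end

sublocale hnn_extension \<subseteq> H: group "hnn_ext G A \<phi>"
  by (rule group_hnn)

type_synonym 'g hnn_nf = "'g \<times> (bool \<times> 'g) list"

context hnn_extension
begin

lemma inv_hnn:
  assumes w: "w \<in> W"
  shows "inv\<^bsub>H\<^esub> (word_class w) = word_class (word_inv w)"
proof -
  have "word_class (word_inv w) \<otimes>\<^bsub>H\<^esub> word_class w = \<one>\<^bsub>H\<^esub>"
    using w by (simp add: mult_hnn one_hnn word_class_eq word_inv_cancel)
  then show ?thesis
    using w by (simp add: H.inv_equality carrier_hnn)
qed

lemma word_class_closed [simp]: "w \<in> W \<Longrightarrow> word_class w \<in> carrier H"
  by (simp add: carrier_hnn)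

subsection \<open>Normal forms\<close>

lemma inc_eq: "inc g = word_class [(Some g, False)]"
  by (simp add: hnn_inc_def word_class_def)

definition stable :: "bool \<Rightarrow> 'g hnn_word set" where
  "stable e = word_class [(None, e)]"

text \<open>\<open>stable e\<close> is \<open>t\<^sup>-\<^sup>1\<close> if \<open>e\<close> and \<open>t\<close> otherwise. Conjugation
  \<open>s \<mapsto> stable e \<cdot> s \<cdot> stable (\<not> e)\<close> maps \<open>assoc e\<close> onto \<open>assoc (\<not> e)\<close> by \<open>assoc_iso e\<close>:
  for \<open>e\<close> this is the defining relation \<open>t\<^sup>-\<^sup>1 a t = \<phi> a\<close>, otherwise its inverse.\<close>

definition assoc :: "bool \<Rightarrow> 'g set" where
  "assoc e = (if e then A else B)"

definition assoc_iso :: "bool \<Rightarrow> 'g \<Rightarrow> 'g" where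
  "assoc_iso e = (if e then \<phi> else inv_into A \<phi>)"

lemma subgroup_assoc: "subgroup (assoc e) G"
  using subgroup_A subgroup_B by (simp add: assoc_def)

lemma assoc_closed: "s \<in> assoc e \<Longrightarrow> s \<in> carrier G"
  using subgroup_assoc subgroup.subset by blast

lemma assoc_iso_iso: "assoc_iso e \<in> iso (G\<lparr>carrier := assoc e\<rparr>) (G\<lparr>carrier := assoc (\<not> e)\<rparr>)"
proof (cases e)
  case False
  have "inv_into A \<phi> \<in> iso (G\<lparr>carrier := B\<rparr>) (G\<lparr>carrier := A\<rparr>)"
    using group.iso_set_sym[OF subgroup.subgroup_is_group[OF subgroup_A group_axioms] \<phi>_iso]
    by simp
  then show ?thesis
    using False by (simp add: assoc_def assoc_iso_def)
qed (use \<phi>_iso in \<open>simp add: assoc_def assoc_iso_def\<close>)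

lemma assoc_iso_hom: "assoc_iso e \<in> hom (G\<lparr>carrier := assoc e\<rparr>) (G\<lparr>carrier := assoc (\<not> e)\<rparr>)"
  using assoc_iso_iso by (simp add: iso_def)

lemma assoc_iso_mem: "s \<in> assoc e \<Longrightarrow> assoc_iso e s \<in> assoc (\<not> e)"
  using hom_in_carrier[OF assoc_iso_hom, of s e] by simp

lemma assoc_iso_inverse: "s \<in> assoc e \<Longrightarrow> assoc_iso (\<not> e) (assoc_iso e s) = s"
proof (cases e)
  case True
  then show "s \<in> assoc e \<Longrightarrow> ?thesis"
    using \<phi>_bij by (simp add: assoc_def assoc_iso_def bij_betw_def inv_into_f_f)
next
  case False
  then show "s \<in> assoc e \<Longrightarrow> ?thesis"
    using \<phi>_bij by (simp add: assoc_def assoc_iso_def bij_betw_def f_inv_into_f)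
qed

lemma assoc_iso_closed: "s \<in> assoc e \<Longrightarrow> assoc_iso e s \<in> carrier G"
  using assoc_iso_mem assoc_closed by blast

lemma assoc_iso_mult:
  assumes "s \<in> assoc e" and "s' \<in> assoc e"
  shows "assoc_iso e (s \<otimes> s') = assoc_iso e s \<otimes> assoc_iso e s'"
  using assoc_iso_hom[of e] assms by (simp add: hom_def)

lemma assoc_coset_rep:
  assumes "g \<in> carrier G"
  shows "g \<otimes> inv (coset_rep (assoc e) g) \<in> assoc e" and "coset_rep (assoc e) g \<in> carrier G"
  using coset_rep_quotient[OF subgroup_assoc assms] coset_rep_closed[OF subgroup_assoc assms] .

text \<open>A pair \<open>(g\<^sub>0, [(e\<^sub>1, c\<^sub>1), \<dots>, (e\<^sub>n, c\<^sub>n)])\<close> stands for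
  \<open>g\<^sub>0 \<cdot> stable e\<^sub>1 \<cdot> c\<^sub>1 \<cdots> stable e\<^sub>n \<cdot> c\<^sub>n\<close>. It is a normal form if each \<open>c\<^sub>i\<close> is
  the chosen representative of its coset of \<open>assoc e\<^sub>i\<close> and no \<open>stable e \<cdot> \<one> \<cdot> stable (\<not> e)\<close>
  occurs. Normal forms are obtained by letting words act on them from the left
  (van der Waerden's trick); \<open>act_stable e\<close> is the action of \<open>stable e\<close>.\<close>

fun nf_syllables :: "(bool \<times> 'g) list \<Rightarrow> bool" where
  "nf_syllables [] = True"
| "nf_syllables ((e, c) # L) \<longleftrightarrow>
     c \<in> carrier G \<and> coset_rep (assoc e) c = c \<and>
     (L \<noteq> [] \<longrightarrow> fst (hd L) \<noteq> e \<longrightarrow> c \<noteq> \<one>) \<and> nf_syllables L"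

definition normal_form :: "'g hnn_nf \<Rightarrow> bool" where
  "normal_form x = (fst x \<in> carrier G \<and> nf_syllables (snd x))"

definition nf_one :: "'g hnn_nf" where
  "nf_one = (\<one>, [])"

definition act_stable :: "bool \<Rightarrow> 'g hnn_nf \<Rightarrow> 'g hnn_nf" where
  "act_stable e x = (let c = coset_rep (assoc e) (fst x); s = fst x \<otimes> inv c in
     if c = \<one> \<and> snd x \<noteq> [] \<and> fst (hd (snd x)) = (\<not> e)
     then (assoc_iso e s \<otimes> snd (hd (snd x)), tl (snd x))
     else (assoc_iso e s, (e, c) # snd x))"

definition act_base :: "'g \<Rightarrow> 'g hnn_nf \<Rightarrow> 'g hnn_nf" where
  "act_base g x = (g \<otimes> fst x, snd x)"

fun act_letter :: "'g hnn_letter \<Rightarrow> 'g hnn_nf \<Rightarrow> 'g hnn_nf" where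
  "act_letter (Some g, False) = act_base g"
| "act_letter (Some g, True) = act_base (inv g)"
| "act_letter (None, e) = act_stable e"

fun act_word :: "'g hnn_word \<Rightarrow> 'g hnn_nf \<Rightarrow> 'g hnn_nf" where
  "act_word [] x = x"
| "act_word (l # w) x = act_letter l (act_word w x)"

lemma act_word_append: "act_word (u @ v) x = act_word u (act_word v x)"
  by (induction u) auto

lemma normal_form_nf_one: "normal_form nf_one"
  by (simp add: normal_form_def nf_one_def)

lemma act_stable_eq:
  assumes "c = coset_rep (assoc e) g0" "s = g0 \<otimes> inv c"
  shows "act_stable e (g0, L) = (if c = \<one> \<and> L \<noteq> [] \<and> fst (hd L) = (\<not> e)
     then (assoc_iso e s \<otimes> snd (hd L), tl L) else (assoc_iso e s, (e, c) # L))"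
  unfolding act_stable_def Let_def using assms by simp

lemma normal_form_act_stable:
  assumes x: "normal_form x" shows "normal_form (act_stable e x)"
proof -
  obtain g0 L where xe: "x = (g0, L)" by (cases x)
  have g0: "g0 \<in> carrier G" and L: "nf_syllables L" using x xe by (auto simp: normal_form_def)
  define c where "c = coset_rep (assoc e) g0"
  define s where "s = g0 \<otimes> inv c"
  have sS: "s \<in> assoc e" and cc: "c \<in> carrier G"
    using assoc_coset_rep[OF g0] by (auto simp: s_def c_def)
  have ps: "assoc_iso e s \<in> carrier G" using assoc_iso_closed[OF sS] .
  show ?thesis
  proof (cases "c = \<one> \<and> L \<noteq> [] \<and> fst (hd L) = (\<not> e)")
    case True
    then obtain c1 L' where L1: "L = (\<not> e, c1) # L'" by (cases L) auto
    have "c1 \<in> carrier G" "nf_syllables L'" using L L1 by auto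
    have "act_stable e x = (assoc_iso e s \<otimes> snd (hd L), tl L)"
      by (simp only: xe act_stable_eq[OF c_def s_def] if_P[OF True])
    then show ?thesis
      using True ps \<open>c1 \<in> carrier G\<close> \<open>nf_syllables L'\<close> by (simp add: L1 normal_form_def)
  next
    case False
    have rr: "coset_rep (assoc e) c = c"
      using coset_rep_idem[OF subgroup_assoc g0] by (simp add: c_def)
    have "normal_form (assoc_iso e s, (e, c) # L)"
      using False ps cc rr L by (cases L) (auto simp: normal_form_def)
    moreover have "act_stable e x = (assoc_iso e s, (e, c) # L)"
      by (simp only: xe act_stable_eq[OF c_def s_def] if_not_P[OF False])
    ultimately show ?thesis by simp
  qed
qed

lemma normal_form_act_base: "normal_form x \<Longrightarrow> g \<in> carrier G \<Longrightarrow> normal_form (act_base g x)"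
  by (simp add: normal_form_def act_base_def)

lemma normal_form_act_letter: "normal_form x \<Longrightarrow> [l] \<in> W \<Longrightarrow> normal_form (act_letter l x)"
  by (cases l rule: act_letter.cases) (auto simp: normal_form_act_base normal_form_act_stable)

lemma normal_form_act_word: "normal_form x \<Longrightarrow> w \<in> W \<Longrightarrow> normal_form (act_word w x)"
proof (induction w)
  case (Cons l w) then show ?case
    using normal_form_act_letter[of "act_word w x" l] by (cases l) auto
qed simp

lemma act_stable_inverse:
  assumes x: "normal_form x" shows "act_stable (\<not> e) (act_stable e x) = x"
proof -
  obtain g0 L where xe: "x = (g0, L)" by (cases x)
  have g0: "g0 \<in> carrier G" and L: "nf_syllables L" using x xe by (auto simp: normal_form_def)
  define c where "c = coset_rep (assoc e) g0"
  define s where "s = g0 \<otimes> inv c"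
  have sS: "s \<in> assoc e" and cc: "c \<in> carrier G"
    using assoc_coset_rep[OF g0] by (auto simp: s_def c_def)
  have ps: "assoc_iso e s \<in> assoc (\<not> e)" using assoc_iso_mem[OF sS] .
  have psc: "assoc_iso e s \<in> carrier G" using ps assoc_closed by blast
  have g0e: "g0 = s \<otimes> c" using g0 cc by (simp add: s_def m_assoc)
  show ?thesis
  proof (cases "c = \<one> \<and> L \<noteq> [] \<and> fst (hd L) = (\<not> e)")
    case True
    then obtain c1 L' where L1: "L = (\<not> e, c1) # L'" by (cases L) auto
    have c1: "c1 \<in> carrier G" "coset_rep (assoc (\<not> e)) c1 = c1" "L' \<noteq> [] \<longrightarrow> fst (hd L') = e \<longrightarrow> c1 \<noteq> \<one>"
      using L L1 by auto
    have a1: "act_stable e x = (assoc_iso e s \<otimes> c1, L')"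
      by (simp only: xe act_stable_eq[OF c_def s_def] if_P[OF True]) (simp add: L1)
    have r: "coset_rep (assoc (\<not> e)) (assoc_iso e s \<otimes> c1) = c1"
      using coset_rep_mult_left[OF subgroup_assoc c1(1) ps] c1 by simp
    have s2: "(assoc_iso e s \<otimes> c1) \<otimes> inv c1 = assoc_iso e s"
      using psc c1 by (simp add: m_assoc)
    have ss: "s = g0" using True by (simp add: s_def g0)
    show ?thesis
    proof (cases "c1 = \<one> \<and> L' \<noteq> [] \<and> fst (hd L') = (\<not> \<not> e)")
      case True2: True
      then show ?thesis using c1 by auto
    next
      case False2: False
      have "act_stable (\<not> e) (assoc_iso e s \<otimes> c1, L')
          = (assoc_iso (\<not> e) (assoc_iso e s), (\<not> e, c1) # L')"
        by (simp only: act_stable_eq[OF r[symmetric] s2[symmetric]] if_not_P[OF False2])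
      then show ?thesis using a1 assoc_iso_inverse[OF sS] ss by (simp add: xe L1)
    qed
  next
    case False
    have a1: "act_stable e x = (assoc_iso e s, (e, c) # L)"
      by (simp only: xe act_stable_eq[OF c_def s_def] if_not_P[OF False])
    have r: "coset_rep (assoc (\<not> e)) (assoc_iso e s) = \<one>"
      using coset_rep_eq_one_iff[OF subgroup_assoc psc] ps by simp
    have "act_stable (\<not> e) (assoc_iso e s, (e, c) # L) = (assoc_iso (\<not> e) (assoc_iso e s) \<otimes> c, L)"
      unfolding act_stable_def using psc by (simp add: Let_def r)
    then show ?thesis using a1 assoc_iso_inverse[OF sS] g0e by (simp add: xe)
  qed
qed

lemma act_base_act_stable:
  assumes x: "normal_form x" and a: "a \<in> A"
  shows "act_base a (act_stable False x) = act_stable False (act_base (\<phi> a) x)"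
proof -
  obtain g0 L where xe: "x = (g0, L)" by (cases x)
  have g0: "g0 \<in> carrier G" and L: "nf_syllables L" using x xe by (auto simp: normal_form_def)
  have pa: "\<phi> a \<in> assoc False"
    using assoc_iso_mem[of a True] a by (simp add: assoc_def assoc_iso_def)
  have pac: "\<phi> a \<in> carrier G" using \<phi>_closed a by blast
  have ac: "a \<in> carrier G" using a A_subset by blast
  define c where "c = coset_rep (assoc False) g0"
  define s where "s = g0 \<otimes> inv c"
  have sS: "s \<in> assoc False" and cc: "c \<in> carrier G"
    using assoc_coset_rep[OF g0] by (auto simp: s_def c_def)
  have rc: "coset_rep (assoc False) (\<phi> a \<otimes> g0) = c"
    using coset_rep_mult_left[OF subgroup_assoc g0 pa] by (simp add: c_def)
  have s': "(\<phi> a \<otimes> g0) \<otimes> inv c = \<phi> a \<otimes> s" using pac g0 cc by (simp add: s_def m_assoc)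
  have pp: "assoc_iso False (\<phi> a \<otimes> s) = a \<otimes> assoc_iso False s"
  proof -
    have "assoc_iso False (\<phi> a) = a"
      using assoc_iso_inverse[of a True] a by (simp add: assoc_def assoc_iso_def)
    then show ?thesis using assoc_iso_mult[OF pa sS] by simp
  qed
  have psc: "assoc_iso False s \<in> carrier G" using assoc_iso_closed[OF sS] .
  have l: "act_stable False (g0, L) = (if c = \<one> \<and> L \<noteq> [] \<and> fst (hd L) = (\<not> False)
     then (assoc_iso False s \<otimes> snd (hd L), tl L) else (assoc_iso False s, (False, c) # L))"
    by (rule act_stable_eq[OF c_def s_def])
  have r: "act_stable False (\<phi> a \<otimes> g0, L) = (if c = \<one> \<and> L \<noteq> [] \<and> fst (hd L) = (\<not> False)
     then (assoc_iso False (\<phi> a \<otimes> s) \<otimes> snd (hd L), tl L)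
     else (assoc_iso False (\<phi> a \<otimes> s), (False, c) # L))"
    by (rule act_stable_eq[OF rc[symmetric] s'[symmetric]])
  have hc: "L \<noteq> [] \<Longrightarrow> snd (hd L) \<in> carrier G" using L by (cases L) auto
  show ?thesis
    unfolding act_base_def xe fst_conv snd_conv l r pp using ac psc hc
    by (auto simp: m_assoc)
qed

lemma act_word_hnn_rel:
  assumes "(u, v) \<in> R" shows "\<forall>x. normal_form x \<longrightarrow> act_word u x = act_word v x"
  using assms
proof (induction rule: hnn_rel.induct)
  case (ctxt u v x y)
  show ?case
  proof (intro allI impI)
    fix z :: "'g hnn_nf" assume z: "normal_form z"
    have "normal_form (act_word y z)" using normal_form_act_word[OF z ctxt(3)] .
    then have "act_word u (act_word y z) = act_word v (act_word y z)"
      using ctxt(4) by (cases "act_word y z") simp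
    then show "act_word (x @ u @ y) z = act_word (x @ v @ y) z" by (simp add: act_word_append)
  qed
next
  case (sym u v) then show ?case by simp
next
  case (trans u v w) then show ?case by simp
next
  case (refl w) then show ?case by simp
next
  case (free s e)
  show ?case
  proof (intro allI impI)
    fix x :: "'g hnn_nf" assume x: "normal_form x"
    show "act_word [(s, e), (s, \<not> e)] x = act_word [] x"
    proof (cases s)
      case None
      then show ?thesis using act_stable_inverse[OF x, of "\<not> e"] by simp
    next
      case (Some g)
      then have g: "g \<in> carrier G" using free by auto
      have "fst x \<in> carrier G" using x by (simp add: normal_form_def)
      then show ?thesis using Some g
        by (cases e) (simp_all add: act_base_def m_assoc[symmetric])
    qed
  qed
next
  case (gmult g h)
  then show ?case by (auto simp: act_base_def normal_form_def m_assoc)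
next
  case gone
  then show ?case by (auto simp: act_base_def normal_form_def)
next
  case (conj a)
  show ?case
  proof (intro allI impI)
    fix x :: "'g hnn_nf" assume x: "normal_form x"
    have pac: "\<phi> a \<in> carrier G" using \<phi>_closed conj by blast
    have "act_word [(None, True), (Some a, False), (None, False)] x
        = act_stable True (act_base a (act_stable False x))" by simp
    also have "\<dots> = act_stable True (act_stable False (act_base (\<phi> a) x))"
      using act_base_act_stable[OF x conj] by simp
    also have "\<dots> = act_base (\<phi> a) x"
      using act_stable_inverse[OF normal_form_act_base[OF x pac], of False] by simp
    finally show "act_word [(None, True), (Some a, False), (None, False)] x
        = act_word [(Some (\<phi> a), False)] x"
      by simp
  qed
qed

fun syllable_word :: "(bool \<times> 'g) list \<Rightarrow> 'g hnn_word" where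
  "syllable_word [] = []"
| "syllable_word ((e, g) # L) = (None, e) # (Some g, False) # syllable_word L"

definition nf_word :: "'g hnn_nf \<Rightarrow> 'g hnn_word" where
  "nf_word x = (Some (fst x), False) # syllable_word (snd x)"

lemma syllable_word_append: "syllable_word (L1 @ L2) = syllable_word L1 @ syllable_word L2"
  by (induction L1 rule: syllable_word.induct) auto

definition syllables_closed :: "(bool \<times> 'g) list \<Rightarrow> bool" where
  "syllables_closed L = (\<forall>p \<in> set L. snd p \<in> carrier G)"

lemma syllables_closed_append [simp]:
  "syllables_closed (L1 @ L2) \<longleftrightarrow> syllables_closed L1 \<and> syllables_closed L2"
  by (auto simp: syllables_closed_def)

lemma syllables_closed_Cons [simp]:
  "syllables_closed (p # L) \<longleftrightarrow> snd p \<in> carrier G \<and> syllables_closed L"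
  by (auto simp: syllables_closed_def)

lemma syllables_closed_Nil [simp]: "syllables_closed []"
  by (auto simp: syllables_closed_def)

lemma syllables_closed_power: "syllables_closed L \<Longrightarrow> syllables_closed (concat (replicate N L))"
  by (induction N) auto

lemma syllable_word_words: "syllables_closed L \<Longrightarrow> syllable_word L \<in> W"
  by (induction L rule: syllable_word.induct) (auto simp: syllables_closed_def)

lemma nf_syllables_closed: "nf_syllables L \<Longrightarrow> syllables_closed L"
  by (induction L rule: nf_syllables.induct) (auto simp: syllables_closed_def)

lemma nf_word_words: "g0 \<in> carrier G \<Longrightarrow> syllables_closed L \<Longrightarrow> nf_word (g0, L) \<in> W"
  by (simp add: nf_word_def syllable_word_words)

lemma normal_form_nf_word_words: "normal_form x \<Longrightarrow> nf_word x \<in> W"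
  by (cases x) (simp add: normal_form_def nf_word_words nf_syllables_closed)

lemma inc_closed[simp]: "g \<in> carrier G \<Longrightarrow> inc g \<in> carrier H"
  by (simp add: inc_eq)
lemma stable_closed[simp]: "stable e \<in> carrier H"
  by (simp add: stable_def)

lemma word_class_Cons: "l # w \<in> W \<Longrightarrow> word_class (l # w) = word_class [l] \<otimes>\<^bsub>H\<^esub> word_class w"
  using mult_hnn[of "[l]" w] by simp

lemma word_class_append:
  "u \<in> W \<Longrightarrow> v \<in> W \<Longrightarrow> word_class (u @ v) = word_class u \<otimes>\<^bsub>H\<^esub> word_class v"
  using mult_hnn by simp

lemma word_class_nf_word:
  "g0 \<in> carrier G \<Longrightarrow> syllables_closed L \<Longrightarrow>
    word_class (nf_word (g0, L)) = inc g0 \<otimes>\<^bsub>H\<^esub> word_class (syllable_word L)"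
  using word_class_Cons[of "(Some g0, False)" "syllable_word L"]
  by (simp add: nf_word_def inc_eq syllable_word_words)

lemma word_class_syllable_word_Cons:
  assumes g: "g \<in> carrier G" and L: "syllables_closed L"
  shows "word_class (syllable_word ((e, g) # L))
    = stable e \<otimes>\<^bsub>H\<^esub> inc g \<otimes>\<^bsub>H\<^esub> word_class (syllable_word L)"
proof -
  have "word_class (syllable_word ((e, g) # L))
      = stable e \<otimes>\<^bsub>H\<^esub> word_class ((Some g, False) # syllable_word L)"
    using word_class_Cons[of "(None, e)" "(Some g, False) # syllable_word L"] g L syllable_word_words
    by (simp add: stable_def)
  also have "\<dots> = stable e \<otimes>\<^bsub>H\<^esub> (inc g \<otimes>\<^bsub>H\<^esub> word_class (syllable_word L))"
    using word_class_Cons[of "(Some g, False)" "syllable_word L"] g L syllable_word_words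
    by (simp add: inc_eq)
  finally show ?thesis
    using g L syllable_word_words by (simp add: H.m_assoc)
qed

lemma word_class_syllable_word_closed [simp]:
  "syllables_closed L \<Longrightarrow> word_class (syllable_word L) \<in> carrier H"
  using syllable_word_words by simp

lemma inc_mult: "g \<in> carrier G \<Longrightarrow> h \<in> carrier G \<Longrightarrow> inc (g \<otimes> h) = inc g \<otimes>\<^bsub>H\<^esub> inc h"
proof -
  assume g: "g \<in> carrier G" and h: "h \<in> carrier G"
  have "word_class [(Some g, False), (Some h, False)] = inc (g \<otimes> h)"
    unfolding inc_eq by (rule word_class_eq) (rule hnn_rel.gmult[OF g h])
  moreover have "word_class [(Some g, False), (Some h, False)] = inc g \<otimes>\<^bsub>H\<^esub> inc h"
    using mult_hnn[of "[(Some g, False)]" "[(Some h, False)]"] g h by (simp add: inc_eq)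
  ultimately show ?thesis by simp
qed

lemma inc_one: "inc \<one> = \<one>\<^bsub>H\<^esub>"
  unfolding inc_eq one_hnn by (rule word_class_eq) (rule hnn_rel.gone)

lemma inc_inv: "g \<in> carrier G \<Longrightarrow> inc (inv g) = inv\<^bsub>H\<^esub> (inc g)"
proof -
  assume g: "g \<in> carrier G"
  have "inc (inv g) \<otimes>\<^bsub>H\<^esub> inc g = \<one>\<^bsub>H\<^esub>"
    using inc_mult[of "inv g" g] g by (simp add: inc_one)
  then show ?thesis using g by (simp add: H.inv_equality)
qed

lemma word_class_syllable_word_append:
  "syllables_closed L1 \<Longrightarrow> syllables_closed L2 \<Longrightarrow>
    word_class (syllable_word (L1 @ L2))
      = word_class (syllable_word L1) \<otimes>\<^bsub>H\<^esub> word_class (syllable_word L2)"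
  by (simp add: syllable_word_append word_class_append syllable_word_words)

lemma word_class_syllable_word_single:
  "g \<in> carrier G \<Longrightarrow> word_class (syllable_word [(e, g)]) = stable e \<otimes>\<^bsub>H\<^esub> inc g"
  using word_class_syllable_word_Cons[of g "[]" e]
  by (simp add: one_hnn[symmetric] del: syllable_word.simps(2))

lemma inc_nat_pow: "g \<in> carrier G \<Longrightarrow> inc (g [^] (n::nat)) = inc g [^]\<^bsub>H\<^esub> n"
  by (induction n) (simp_all add: inc_one inc_mult)

lemma word_class_inv_letter: "g \<in> carrier G \<Longrightarrow> word_class [(Some g, True)] = inv\<^bsub>H\<^esub> (inc g)"
  using inv_hnn[of "[(Some g, False)]"] by (simp add: inc_eq word_inv_def)

lemma inv_stable: "inv\<^bsub>H\<^esub> (stable e) = stable (\<not> e)"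
  using inv_hnn[of "[(None, e)]"] by (simp add: stable_def word_inv_def)

lemma stable_conj_A:
  assumes a: "a \<in> A"
  shows "stable True \<otimes>\<^bsub>H\<^esub> inc a \<otimes>\<^bsub>H\<^esub> stable False = inc (\<phi> a)"
proof -
  have "word_class [(None, True), (Some a, False), (None, False)] = inc (\<phi> a)"
    unfolding inc_eq by (rule word_class_eq) (rule hnn_rel.conj[OF a])
  moreover have "word_class [(None, True), (Some a, False), (None, False)]
      = stable True \<otimes>\<^bsub>H\<^esub> inc a \<otimes>\<^bsub>H\<^esub> stable False"
    using word_class_Cons[of "(None, True)" "[(Some a, False), (None, False)]"]
      word_class_Cons[of "(Some a, False)" "[(None, False)]"] a A_subset
    by (auto simp: stable_def inc_eq H.m_assoc)
  ultimately show ?thesis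
    by simp
qed

lemma stable_conj_assoc:
  assumes s: "s \<in> assoc e"
  shows "stable e \<otimes>\<^bsub>H\<^esub> inc s \<otimes>\<^bsub>H\<^esub> stable (\<not> e) = inc (assoc_iso e s)"
proof (cases e)
  case True
  then show ?thesis
    using stable_conj_A s by (simp add: assoc_def assoc_iso_def)
next
  case False
  define a where "a = assoc_iso False s"
  have a: "a \<in> A" and "a \<in> carrier G"
    using assoc_iso_mem[OF s] False A_subset by (auto simp: a_def assoc_def)
  have "\<phi> a = s"
    using assoc_iso_inverse[OF s] False by (simp add: a_def assoc_iso_def)
  then have "stable False \<otimes>\<^bsub>H\<^esub> inc s \<otimes>\<^bsub>H\<^esub> stable True
      = stable False \<otimes>\<^bsub>H\<^esub> (stable True \<otimes>\<^bsub>H\<^esub> inc a \<otimes>\<^bsub>H\<^esub> stable False) \<otimes>\<^bsub>H\<^esub> stable True"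
    using stable_conj_A[OF a] by simp
  also have "\<dots> = inc a"
    using \<open>a \<in> carrier G\<close> by (simp add: H.m_assoc inv_stable[of False, simplified, symmetric])
  finally show ?thesis
    using False by (simp add: a_def)
qed

lemma assoc_iso_stable_commute:
  assumes s: "s \<in> assoc e"
  shows "inc (assoc_iso e s) \<otimes>\<^bsub>H\<^esub> stable e = stable e \<otimes>\<^bsub>H\<^esub> inc s"
proof -
  have sc: "s \<in> carrier G" using assoc_closed[OF s] .
  have "inc (assoc_iso e s) \<otimes>\<^bsub>H\<^esub> stable e = stable e \<otimes>\<^bsub>H\<^esub> inc s \<otimes>\<^bsub>H\<^esub> stable (\<not> e) \<otimes>\<^bsub>H\<^esub> stable e"
    using stable_conj_assoc[OF s] by simp
  also have "\<dots> = stable e \<otimes>\<^bsub>H\<^esub> inc s"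
    using sc by (simp add: inv_stable[symmetric] H.m_assoc)
  finally show ?thesis .
qed

lemma normal_formD: "normal_form (g0, L) \<Longrightarrow> g0 \<in> carrier G \<and> syllables_closed L \<and> nf_syllables L"
  by (simp add: normal_form_def nf_syllables_closed)

lemma word_class_act_stable:
  assumes x: "normal_form x"
  shows "word_class (nf_word (act_stable e x)) = stable e \<otimes>\<^bsub>H\<^esub> word_class (nf_word x)"
proof -
  obtain g0 L where xe: "x = (g0, L)"
    by (cases x)
  have g0: "g0 \<in> carrier G" and L: "syllables_closed L"
    using normal_formD x xe by auto
  define c where "c = coset_rep (assoc e) g0"
  define s where "s = g0 \<otimes> inv c"
  have sS: "s \<in> assoc e" and c: "c \<in> carrier G"
    using assoc_coset_rep[OF g0] by (auto simp: s_def c_def)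
  have s: "s \<in> carrier G" and psi_s: "assoc_iso e s \<in> carrier G"
    using assoc_closed[OF sS] assoc_iso_closed[OF sS] .
  show ?thesis
  proof (cases "c = \<one> \<and> L \<noteq> [] \<and> fst (hd L) = (\<not> e)")
    case True
    then obtain c1 L' where L1: "L = (\<not> e, c1) # L'"
      by (cases L) auto
    have c1: "c1 \<in> carrier G" "syllables_closed L'"
      using L L1 by (auto simp: syllables_closed_def)
    have "act_stable e x = (assoc_iso e s \<otimes> c1, L')"
      by (simp only: xe act_stable_eq[OF c_def s_def] if_P[OF True]) (simp add: L1)
    then have "word_class (nf_word (act_stable e x))
        = inc (assoc_iso e s) \<otimes>\<^bsub>H\<^esub> inc c1 \<otimes>\<^bsub>H\<^esub> word_class (syllable_word L')"
      using c1 psi_s by (simp add: word_class_nf_word inc_mult)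
    also have "\<dots> = stable e \<otimes>\<^bsub>H\<^esub> inc s \<otimes>\<^bsub>H\<^esub> stable (\<not> e) \<otimes>\<^bsub>H\<^esub> inc c1
        \<otimes>\<^bsub>H\<^esub> word_class (syllable_word L')"
      using stable_conj_assoc[OF sS] by simp
    also have "\<dots> = stable e \<otimes>\<^bsub>H\<^esub> word_class (nf_word x)"
      using True c1 s g0 L by (simp add: xe L1 s_def word_class_nf_word word_class_syllable_word_Cons
          H.m_assoc del: syllable_word.simps)
    finally show ?thesis .
  next
    case False
    have "act_stable e x = (assoc_iso e s, (e, c) # L)"
      by (simp only: xe act_stable_eq[OF c_def s_def] if_not_P[OF False])
    then have "word_class (nf_word (act_stable e x))
        = inc (assoc_iso e s) \<otimes>\<^bsub>H\<^esub> stable e \<otimes>\<^bsub>H\<^esub> inc c \<otimes>\<^bsub>H\<^esub> word_class (syllable_word L)"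
      using c psi_s L by (simp add: word_class_nf_word word_class_syllable_word_Cons H.m_assoc
          del: syllable_word.simps)
    also have "\<dots> = stable e \<otimes>\<^bsub>H\<^esub> inc s \<otimes>\<^bsub>H\<^esub> inc c \<otimes>\<^bsub>H\<^esub> word_class (syllable_word L)"
      using assoc_iso_stable_commute[OF sS] by simp
    also have "\<dots> = stable e \<otimes>\<^bsub>H\<^esub> word_class (nf_word x)"
      using s c L g0 by (simp add: xe word_class_nf_word s_def inc_mult[symmetric] H.m_assoc m_assoc)
    finally show ?thesis .
  qed
qed

lemma word_class_act_letter:
  assumes x: "normal_form x" and l: "[l] \<in> W"
  shows "word_class (nf_word (act_letter l x)) = word_class [l] \<otimes>\<^bsub>H\<^esub> word_class (nf_word x)"
proof -
  obtain g0 L where xe: "x = (g0, L)"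
    by (cases x)
  have g0: "g0 \<in> carrier G" and L: "syllables_closed L"
    using normal_formD x xe by auto
  show ?thesis
  proof (cases l rule: act_letter.cases)
    case (1 g)
    then show ?thesis
      using g0 L l by (simp add: xe act_base_def word_class_nf_word inc_mult H.m_assoc inc_eq[symmetric])
  next
    case (2 g)
    then show ?thesis
      using g0 L l by (simp add: xe act_base_def word_class_nf_word inc_mult H.m_assoc
          word_class_inv_letter inc_inv)
  next
    case (3 e)
    then show ?thesis
      using word_class_act_stable[OF x] by (simp add: stable_def)
  qed
qed

lemma word_class_act_word:
  assumes x: "normal_form x" and w: "w \<in> W"
  shows "word_class (nf_word (act_word w x)) = word_class w \<otimes>\<^bsub>H\<^esub> word_class (nf_word x)"
  using w
proof (induction w)
  case Nil
  then show ?case using normal_form_nf_word_words[OF x] by (simp add: one_hnn[symmetric])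
next
  case (Cons l w)
  have lW: "[l] \<in> W" using Cons.prems by (cases l) auto
  have wW: "w \<in> W" using Cons.prems by (cases l) auto
  have "word_class (nf_word (act_word (l # w) x))
      = word_class [l] \<otimes>\<^bsub>H\<^esub> word_class (nf_word (act_word w x))"
    using word_class_act_letter[OF normal_form_act_word[OF x wW] lW] by simp
  also have "\<dots> = word_class [l] \<otimes>\<^bsub>H\<^esub> (word_class w \<otimes>\<^bsub>H\<^esub> word_class (nf_word x))"
    using Cons.IH wW by simp
  also have "\<dots> = word_class (l # w) \<otimes>\<^bsub>H\<^esub> word_class (nf_word x)"
    using word_class_Cons[OF Cons.prems] lW wW normal_form_nf_word_words[OF x]
    by (simp add: H.m_assoc)
  finally show ?case .
qed

lemma word_class_nf_one: "word_class (nf_word nf_one) = \<one>\<^bsub>H\<^esub>"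
  using word_class_nf_word[of \<one> "[]"]
  by (simp add: nf_one_def syllables_closed_def inc_one one_hnn[symmetric])

lemma word_class_normal_form: "w \<in> W \<Longrightarrow> word_class (nf_word (act_word w nf_one)) = word_class w"
  using word_class_act_word[OF normal_form_nf_one] word_class_nf_one by simp

subsection \<open>The length of an element\<close>

definition stable_count :: "'g hnn_word \<Rightarrow> nat" where
  "stable_count w = length (filter (\<lambda>l. fst l = None) w)"

lemma length_act_stable: "length (snd (act_stable e x)) \<le> Suc (length (snd x))"
  by (auto simp: act_stable_def Let_def)

lemma length_act_word: "length (snd (act_word w x)) \<le> stable_count w + length (snd x)"
proof (induction w)
  case Nil then show ?case by (simp add: stable_count_def)
next
  case (Cons l w)
  then show ?case
    by (cases l rule: act_letter.cases)
      (auto simp: stable_count_def act_base_def intro: le_trans[OF length_act_stable])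
qed

lemma stable_count_syllable_word: "stable_count (syllable_word L) = length L"
  by (induction L rule: syllable_word.induct) (auto simp: stable_count_def)

lemma stable_count_nf_word: "stable_count (nf_word x) = length (snd x)"
  using stable_count_syllable_word by (simp add: nf_word_def stable_count_def)

lemma stable_count_word_inv: "stable_count (word_inv w) = stable_count w"
proof -
  have "length (filter (\<lambda>l. fst l = None) (map (\<lambda>(s, e). (s, \<not> e)) w)) = stable_count w"
    by (induction w) (auto simp: stable_count_def)
  then show ?thesis by (simp add: word_inv_def stable_count_def rev_filter[symmetric])
qed

text \<open>The number of stable letters in the normal form; by \<open>act_word_hnn_rel\<close> it does not
  depend on the word chosen by \<open>SOME\<close>.\<close>

definition hnn_length :: "'g hnn_word set \<Rightarrow> nat" where
  "hnn_length h = length (snd (act_word (SOME w. w \<in> W \<and> word_class w = h) nf_one))"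

lemma hnn_length_word_class: "w \<in> W \<Longrightarrow> hnn_length (word_class w) = length (snd (act_word w nf_one))"
proof -
  assume w: "w \<in> W"
  let ?w = "SOME w'. w' \<in> W \<and> word_class w' = word_class w"
  have "?w \<in> W \<and> word_class ?w = word_class w"
    using someI[of "\<lambda>w'. w' \<in> W \<and> word_class w' = word_class w" w] w by simp
  then have "(?w, w) \<in> R" using word_class_eq_iff w by blast
  then have "act_word ?w nf_one = act_word w nf_one"
    using act_word_hnn_rel normal_form_nf_one by blast
  then show ?thesis by (simp add: hnn_length_def)
qed

lemma hnn_length_le: "w \<in> W \<Longrightarrow> hnn_length (word_class w) \<le> stable_count w"
  using hnn_length_word_class length_act_word[of w nf_one] by (simp add: nf_one_def)

lemma normal_form_exists:
  assumes "h \<in> carrier H"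
  obtains g0 L where "normal_form (g0, L)" and "h = word_class (nf_word (g0, L))"
    and "hnn_length h = length L"
proof -
  obtain w where w: "w \<in> W" "h = word_class w"
    using assms by (auto simp: carrier_hnn)
  show thesis
    using that[of "fst (act_word w nf_one)" "snd (act_word w nf_one)"] w word_class_normal_form
      hnn_length_word_class normal_form_act_word[OF normal_form_nf_one w(1)]
    by simp
qed

lemma hnn_length_mult:
  assumes a: "a \<in> carrier H" and b: "b \<in> carrier H"
  shows "hnn_length (a \<otimes>\<^bsub>H\<^esub> b) \<le> hnn_length a + hnn_length b"
proof -
  obtain g0 L where xa: "normal_form (g0, L)" "a = word_class (nf_word (g0, L))"
    "hnn_length a = length L"
    using normal_form_exists[OF a] .
  obtain wb where wb: "wb \<in> W" "b = word_class wb" using b by (auto simp: carrier_hnn)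
  have "a \<otimes>\<^bsub>H\<^esub> b = word_class (nf_word (g0, L) @ wb)"
    using mult_hnn normal_form_nf_word_words[OF xa(1)] wb xa by simp
  then have "hnn_length (a \<otimes>\<^bsub>H\<^esub> b) = length (snd (act_word (nf_word (g0, L)) (act_word wb nf_one)))"
    using hnn_length_word_class normal_form_nf_word_words[OF xa(1)] wb
    by (simp add: act_word_append)
  also have "\<dots> \<le> stable_count (nf_word (g0, L)) + length (snd (act_word wb nf_one))"
    by (rule length_act_word)
  also have "\<dots> = hnn_length a + hnn_length b"
    using xa wb hnn_length_word_class by (simp add: stable_count_nf_word)
  finally show ?thesis .
qed

lemma hnn_length_inv:
  assumes a: "a \<in> carrier H"
  shows "hnn_length (inv\<^bsub>H\<^esub> a) \<le> hnn_length a"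
proof -
  obtain g0 L where xa: "normal_form (g0, L)" "a = word_class (nf_word (g0, L))"
    "hnn_length a = length L"
    using normal_form_exists[OF a] .
  have "inv\<^bsub>H\<^esub> a = word_class (word_inv (nf_word (g0, L)))"
    using inv_hnn normal_form_nf_word_words[OF xa(1)] xa by simp
  then show ?thesis
    using hnn_length_le[of "word_inv (nf_word (g0, L))"] normal_form_nf_word_words[OF xa(1)] xa
    by (simp add: stable_count_word_inv stable_count_nf_word)
qed

lemma hnn_length_inc: "g \<in> carrier G \<Longrightarrow> hnn_length (inc g) = 0"
  using hnn_length_le[of "[(Some g, False)]"] by (simp add: inc_eq stable_count_def)

text \<open>\<open>pinch e g e'\<close>: the subword \<open>stable e \<cdot> g \<cdot> stable e'\<close> collapses to an element of \<open>G\<close>.\<close>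

definition pinch :: "bool \<Rightarrow> 'g \<Rightarrow> bool \<Rightarrow> bool" where
  "pinch e g e' = (e' = (\<not> e) \<and> g \<in> assoc e)"

fun reduced :: "(bool \<times> 'g) list \<Rightarrow> bool" where
  "reduced ((e, g) # (e', g') # L) = (\<not> pinch e g e' \<and> reduced ((e', g') # L))"
| "reduced _ = True"

text \<open>Britton's lemma, in the form that a reduced word reaches a normal form with the same number
  of syllables. The last conjunct is the invariant that keeps the induction going.\<close>

lemma act_nf_word_reduced:
  assumes "reduced L" "L \<noteq> []" "g0 \<in> carrier G" "syllables_closed L"
  shows "length (snd (act_word (nf_word (g0, L)) nf_one)) = length L
    \<and> snd (act_word (nf_word (g0, L)) nf_one) \<noteq> []
    \<and> fst (hd (snd (act_word (nf_word (g0, L)) nf_one))) = fst (hd L)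
    \<and> inv g0 \<otimes> fst (act_word (nf_word (g0, L)) nf_one) \<in> assoc (\<not> fst (hd L))"
  using assms
proof (induction L arbitrary: g0 rule: reduced.induct)
  case (1 e1 g1 e2 g2 L)
  let ?L2 = "(e2, g2) # L"
  have g1: "g1 \<in> carrier G" and L2c: "syllables_closed ?L2"
    using 1 by (auto simp: syllables_closed_def)
  have np: "\<not> pinch e1 g1 e2" and r2: "reduced ?L2" using 1 by auto
  define y where "y = act_word (nf_word (g1, ?L2)) nf_one"
  have IH: "length (snd y) = length ?L2 \<and> snd y \<noteq> [] \<and> fst (hd (snd y)) = e2
      \<and> inv g1 \<otimes> fst y \<in> assoc (\<not> e2)"
    using "1.IH"[OF r2 _ g1 L2c] by (simp add: y_def)
  have yNF: "normal_form y" unfolding y_def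
    using normal_form_act_word[OF normal_form_nf_one nf_word_words[OF g1 L2c]] .
  obtain h1 M where ye: "y = (h1, M)" by (cases y)
  have h1: "h1 \<in> carrier G" using yNF ye by (simp add: normal_form_def)
  have eq: "act_word (nf_word (g0, (e1, g1) # ?L2)) nf_one = act_base g0 (act_stable e1 y)"
    by (simp add: nf_word_def y_def)
  define c where "c = coset_rep (assoc e1) h1"
  define s where "s = h1 \<otimes> inv c"
  have sS: "s \<in> assoc e1" using assoc_coset_rep[OF h1] by (simp add: s_def c_def)
  have nc: "\<not> (c = \<one> \<and> M \<noteq> [] \<and> fst (hd M) = (\<not> e1))"
  proof
    assume a: "c = \<one> \<and> M \<noteq> [] \<and> fst (hd M) = (\<not> e1)"
    then have h1S: "h1 \<in> assoc e1"
      using coset_rep_eq_one_iff[OF subgroup_assoc h1] by (simp add: c_def)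
    have e2: "e2 = (\<not> e1)" using a IH ye by simp
    have d: "inv g1 \<otimes> h1 \<in> assoc e1" using IH ye e2 by simp
    have "g1 = h1 \<otimes> inv (inv g1 \<otimes> h1)"
      using g1 h1 by (simp add: inv_mult_group m_assoc[symmetric])
    then have "g1 \<in> assoc e1"
      using subgroup.m_closed[OF subgroup_assoc h1S subgroup.m_inv_closed[OF subgroup_assoc d]]
      by simp
    then show False using np e2 by (simp add: pinch_def)
  qed
  have at: "act_stable e1 y = (assoc_iso e1 s, (e1, c) # M)"
    by (simp only: ye act_stable_eq[OF c_def s_def] if_not_P[OF nc])
  have "inv g0 \<otimes> (g0 \<otimes> assoc_iso e1 s) = assoc_iso e1 s"
    using "1.prems"(3) assoc_iso_closed[OF sS]
    by (simp add: m_assoc[symmetric])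
  then show ?case using IH ye eq at assoc_iso_mem[OF sS] by (simp add: act_base_def)
next
  case ("2_2" p)
  obtain e1 g1 where p: "p = (e1, g1)" by (cases p)
  have g1: "g1 \<in> carrier G" using "2_2" p by (auto simp: syllables_closed_def)
  define c where "c = coset_rep (assoc e1) g1"
  define s where "s = g1 \<otimes> inv c"
  have sS: "s \<in> assoc e1" using assoc_coset_rep[OF g1] by (simp add: s_def c_def)
  have eq: "act_word (nf_word (g0, [(e1, g1)])) nf_one = act_base g0 (act_stable e1 (g1, []))"
    using g1 by (simp add: nf_word_def nf_one_def act_base_def)
  have at: "act_stable e1 (g1, []) = (assoc_iso e1 s, [(e1, c)])"
    by (simp add: act_stable_eq[OF c_def s_def])
  have "inv g0 \<otimes> (g0 \<otimes> assoc_iso e1 s) = assoc_iso e1 s"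
    using "2_2.prems"(3) assoc_iso_closed[OF sS]
    by (simp add: m_assoc[symmetric])
  then show ?case using eq at assoc_iso_mem[OF sS] p by (simp add: act_base_def)
qed simp

lemma hnn_length_reduced:
  assumes "reduced L" "g0 \<in> carrier G" "syllables_closed L"
  shows "hnn_length (word_class (nf_word (g0, L))) = length L"
proof (cases "L = []")
  case True
  then show ?thesis
    using assms hnn_length_le[of "nf_word (g0, L)"] nf_word_words
    by (simp add: stable_count_nf_word)
next
  case False
  then show ?thesis
    using act_nf_word_reduced[OF assms(1) False assms(2,3)] hnn_length_word_class nf_word_words assms
    by simp
qed

lemma nf_syllables_reduced: "nf_syllables L \<Longrightarrow> reduced L"
proof (induction L rule: reduced.induct)
  case (1 e g e' g' L)
  have g: "g \<in> carrier G" "coset_rep (assoc e) g = g" and r: "e' \<noteq> e \<longrightarrow> g \<noteq> \<one>" using 1 by auto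
  have "\<not> pinch e g e'"
    using coset_rep_eq_one_iff[OF subgroup_assoc g(1), of e] g(2) r by (auto simp: pinch_def)
  then show ?case using 1 by simp
qed simp_all

lemma reduced_append:
  assumes "reduced L1" and "reduced L2"
    and "L1 \<noteq> [] \<Longrightarrow> L2 \<noteq> [] \<Longrightarrow> \<not> pinch (fst (last L1)) (snd (last L1)) (fst (hd L2))"
  shows "reduced (L1 @ L2)"
  using assms
proof (induction L1 rule: reduced.induct)
  case ("2_2" p)
  then show ?case
    by (cases p; cases L2) auto
qed auto

lemma reduced_snoc_cong: "reduced (L @ [(e, g)]) \<Longrightarrow> reduced (L @ [(e, g')])"
  by (induction L rule: reduced.induct) (auto simp: Cons_eq_append_conv)

subsection \<open>Cyclically reduced elements have no elliptic powers\<close>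

definition cyclically_reduced :: "(bool \<times> 'g) list \<Rightarrow> bool" where
  "cyclically_reduced L \<longleftrightarrow>
     reduced L \<and> L \<noteq> [] \<and> \<not> pinch (fst (last L)) (snd (last L)) (fst (hd L))"

lemma reduced_power: "cyclically_reduced L \<Longrightarrow> reduced (concat (replicate N L))"
proof (induction N)
  case (Suc N)
  then have "concat (replicate N L) \<noteq> [] \<Longrightarrow> hd (concat (replicate N L)) = hd L"
    by (cases N) (auto simp: cyclically_reduced_def)
  with Suc show ?case
    by (auto simp: cyclically_reduced_def intro: reduced_append)
qed simp

lemma hnn_length_cyclic_power:
  assumes L: "cyclically_reduced L" "syllables_closed L"
  shows "hnn_length (word_class (syllable_word L) [^]\<^bsub>H\<^esub> (N::nat)) = N * length L"
proof -
  have "word_class (syllable_word L) [^]\<^bsub>H\<^esub> N = word_class (syllable_word (concat (replicate N L)))"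
  proof (induction N)
    case (Suc N)
    have "word_class (syllable_word L) [^]\<^bsub>H\<^esub> Suc N
        = word_class (syllable_word L) \<otimes>\<^bsub>H\<^esub> word_class (syllable_word L) [^]\<^bsub>H\<^esub> N"
      by (rule H.nat_pow_Suc2) (simp add: L(2))
    then show ?case
      using Suc L(2) syllables_closed_power[OF L(2)]
      by (simp add: word_class_syllable_word_append)
  qed (simp add: one_hnn)
  also have "\<dots> = word_class (nf_word (\<one>, concat (replicate N L)))"
    using syllables_closed_power[OF L(2)] by (simp add: word_class_nf_word inc_one)
  finally show ?thesis
    using hnn_length_reduced[OF reduced_power[OF L(1)] one_closed syllables_closed_power[OF L(2)]]
    by (simp add: length_concat sum_list_replicate)
qed

text \<open>The elements conjugate into \<open>G\<close> are those fixing a vertex of the Bass--Serre tree.\<close>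

definition elliptic :: "'g hnn_word set \<Rightarrow> bool" where
  "elliptic h \<longleftrightarrow> (\<exists>x\<in>carrier H. \<exists>g\<in>carrier G. h = inv\<^bsub>H\<^esub> x \<otimes>\<^bsub>H\<^esub> inc g \<otimes>\<^bsub>H\<^esub> x)"

lemma elliptic_conj:
  assumes "elliptic h" and y: "y \<in> carrier H"
  shows "elliptic (inv\<^bsub>H\<^esub> y \<otimes>\<^bsub>H\<^esub> h \<otimes>\<^bsub>H\<^esub> y)"
proof -
  obtain x g where x: "x \<in> carrier H" and g: "g \<in> carrier G" and h: "h = inv\<^bsub>H\<^esub> x \<otimes>\<^bsub>H\<^esub> inc g \<otimes>\<^bsub>H\<^esub> x"
    using assms(1) by (auto simp: elliptic_def)
  have "inv\<^bsub>H\<^esub> y \<otimes>\<^bsub>H\<^esub> h \<otimes>\<^bsub>H\<^esub> y = inv\<^bsub>H\<^esub> (x \<otimes>\<^bsub>H\<^esub> y) \<otimes>\<^bsub>H\<^esub> inc g \<otimes>\<^bsub>H\<^esub> (x \<otimes>\<^bsub>H\<^esub> y)"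
    using x y g by (simp add: h H.inv_mult_group H.m_assoc)
  then show ?thesis
    using x y g unfolding elliptic_def by blast
qed

lemma elliptic_conj_iff:
  assumes "h \<in> carrier H" and "y \<in> carrier H"
  shows "elliptic (inv\<^bsub>H\<^esub> y \<otimes>\<^bsub>H\<^esub> h \<otimes>\<^bsub>H\<^esub> y) \<longleftrightarrow> elliptic h"
proof
  assume "elliptic (inv\<^bsub>H\<^esub> y \<otimes>\<^bsub>H\<^esub> h \<otimes>\<^bsub>H\<^esub> y)"
  then have "elliptic (inv\<^bsub>H\<^esub> (inv\<^bsub>H\<^esub> y) \<otimes>\<^bsub>H\<^esub> (inv\<^bsub>H\<^esub> y \<otimes>\<^bsub>H\<^esub> h \<otimes>\<^bsub>H\<^esub> y) \<otimes>\<^bsub>H\<^esub> inv\<^bsub>H\<^esub> y)"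
    using assms(2) by (rule elliptic_conj[OF _ H.inv_closed])
  then show "elliptic h"
    using assms by (simp add: H.m_assoc)
qed (use assms(2) elliptic_conj in blast)

lemma elliptic_inc: "g \<in> carrier G \<Longrightarrow> elliptic (inc g)"
  unfolding elliptic_def by (intro bexI[of _ "\<one>\<^bsub>H\<^esub>"] bexI[of _ g]) simp_all

lemma conj_inc_nat_pow:
  "x \<in> carrier H \<Longrightarrow> g \<in> carrier G \<Longrightarrow>
    (inv\<^bsub>H\<^esub> x \<otimes>\<^bsub>H\<^esub> inc g \<otimes>\<^bsub>H\<^esub> x) [^]\<^bsub>H\<^esub> (n::nat) = inv\<^bsub>H\<^esub> x \<otimes>\<^bsub>H\<^esub> inc (g [^] n) \<otimes>\<^bsub>H\<^esub> x"
  by (simp add: H.conj_nat_pow inc_nat_pow)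

lemma hnn_length_elliptic:
  assumes "x \<in> carrier H" and "g \<in> carrier G"
  shows "hnn_length (inv\<^bsub>H\<^esub> x \<otimes>\<^bsub>H\<^esub> inc g \<otimes>\<^bsub>H\<^esub> x) \<le> 2 * hnn_length x"
proof -
  have "hnn_length (inv\<^bsub>H\<^esub> x \<otimes>\<^bsub>H\<^esub> inc g \<otimes>\<^bsub>H\<^esub> x) \<le> hnn_length (inv\<^bsub>H\<^esub> x \<otimes>\<^bsub>H\<^esub> inc g) + hnn_length x"
    using assms by (simp add: hnn_length_mult)
  also have "\<dots> \<le> hnn_length (inv\<^bsub>H\<^esub> x) + hnn_length (inc g) + hnn_length x"
    using assms hnn_length_mult[of "inv\<^bsub>H\<^esub> x" "inc g"] by simp
  also have "\<dots> \<le> 2 * hnn_length x"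
    using assms hnn_length_inv[of x] hnn_length_inc[of g] by simp
  finally show ?thesis .
qed

text \<open>If the \<open>m\<close>-th power of \<open>h\<close> were conjugate to \<open>inc g\<close> by \<open>x\<close>, the lengths of the powers
  \<open>h\<^bsup>m j\<^esup>\<close> would stay bounded by \<open>2 |x|\<close>, while they grow like \<open>m j |L|\<close>.\<close>

lemma cyclically_reduced_not_elliptic_power:
  assumes L: "cyclically_reduced L" "syllables_closed L" and m: "0 < m"
  shows "\<not> elliptic (word_class (syllable_word L) [^]\<^bsub>H\<^esub> (m::nat))"
proof
  define h where "h = word_class (syllable_word L)"
  assume "elliptic (h [^]\<^bsub>H\<^esub> m)"
  then obtain x g where x: "x \<in> carrier H" and g: "g \<in> carrier G"
    and hm: "h [^]\<^bsub>H\<^esub> m = inv\<^bsub>H\<^esub> x \<otimes>\<^bsub>H\<^esub> inc g \<otimes>\<^bsub>H\<^esub> x"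
    by (auto simp: elliptic_def h_def)
  have h: "h \<in> carrier H"
    using L(2) by (simp add: h_def)
  define j where "j = 2 * hnn_length x + 1"
  have "h [^]\<^bsub>H\<^esub> (m * j) = (h [^]\<^bsub>H\<^esub> m) [^]\<^bsub>H\<^esub> j"
    using H.nat_pow_pow[OF h] by simp
  also have "\<dots> = inv\<^bsub>H\<^esub> x \<otimes>\<^bsub>H\<^esub> inc (g [^] j) \<otimes>\<^bsub>H\<^esub> x"
    using x g by (simp add: hm conj_inc_nat_pow)
  finally have "h [^]\<^bsub>H\<^esub> (m * j) = inv\<^bsub>H\<^esub> x \<otimes>\<^bsub>H\<^esub> inc (g [^] j) \<otimes>\<^bsub>H\<^esub> x" .
  then have "m * j * length L \<le> 2 * hnn_length x"
    using hnn_length_elliptic[OF x, of "g [^] j"] hnn_length_cyclic_power[OF L, of "m * j"] g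
    by (simp add: h_def)
  moreover have "j \<le> m * j * length L"
  proof -
    have "1 \<le> m * length L"
      using m L(1) by (simp add: cyclically_reduced_def Suc_le_eq)
    then have "j * 1 \<le> j * (m * length L)"
      by (rule mult_le_mono2)
    then show ?thesis
      by (simp add: mult.commute mult.left_commute)
  qed
  ultimately show False
    by (simp add: j_def)
qed

subsection \<open>Roots of elliptic elements\<close>

lemma hnn_length_zero_elliptic:
  assumes "h \<in> carrier H" and "hnn_length h = 0"
  shows "elliptic h"
proof -
  obtain g0 L where nf: "normal_form (g0, L)" and h: "h = word_class (nf_word (g0, L))"
    and "hnn_length h = length L"
    using normal_form_exists[OF assms(1)] by auto
  then have "h = inv\<^bsub>H\<^esub> \<one>\<^bsub>H\<^esub> \<otimes>\<^bsub>H\<^esub> inc g0 \<otimes>\<^bsub>H\<^esub> \<one>\<^bsub>H\<^esub>" and "g0 \<in> carrier G"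
    using assms(2) normal_formD[OF nf] by (simp_all add: word_class_nf_word one_hnn[symmetric])
  then show ?thesis
    unfolding elliptic_def by blast
qed

lemma conj_rotate_nf_word:
  assumes "g0 \<in> carrier G" and "gn \<in> carrier G" and "syllables_closed L"
  shows "inv\<^bsub>H\<^esub> (inc g0) \<otimes>\<^bsub>H\<^esub> word_class (nf_word (g0, L @ [(e, gn)])) \<otimes>\<^bsub>H\<^esub> inc g0
    = word_class (syllable_word (L @ [(e, gn \<otimes> g0)]))"
  using assms
  by (simp add: word_class_nf_word word_class_syllable_word_append word_class_syllable_word_single
      inc_mult H.m_assoc del: syllable_word.simps)

text \<open>A pinch across the ends of a cyclic word is removed by conjugation with its last syllable.\<close>

lemma conj_cyclic_pinch:
  assumes "pinch e c e1" and "g1 \<in> carrier G" and "c \<in> carrier G" and "syllables_closed M"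
  shows "stable e \<otimes>\<^bsub>H\<^esub> inc c \<otimes>\<^bsub>H\<^esub> word_class (syllable_word ((e1, g1) # M @ [(e, c)]))
      \<otimes>\<^bsub>H\<^esub> inv\<^bsub>H\<^esub> (stable e \<otimes>\<^bsub>H\<^esub> inc c)
    = word_class (nf_word (assoc_iso e c \<otimes> g1, M))"
proof -
  have e1: "e1 = (\<not> e)" and c: "c \<in> assoc e"
    using assms(1) by (auto simp: pinch_def)
  have "word_class (syllable_word ((e1, g1) # M @ [(e, c)]))
      = stable (\<not> e) \<otimes>\<^bsub>H\<^esub> inc g1 \<otimes>\<^bsub>H\<^esub> word_class (syllable_word M) \<otimes>\<^bsub>H\<^esub> (stable e \<otimes>\<^bsub>H\<^esub> inc c)"
    using assms(2-4)
    by (simp add: e1 word_class_syllable_word_Cons word_class_syllable_word_append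
        word_class_syllable_word_single H.m_assoc one_hnn[symmetric] del: syllable_word.simps(2))
  then have "stable e \<otimes>\<^bsub>H\<^esub> inc c \<otimes>\<^bsub>H\<^esub> word_class (syllable_word ((e1, g1) # M @ [(e, c)]))
      \<otimes>\<^bsub>H\<^esub> inv\<^bsub>H\<^esub> (stable e \<otimes>\<^bsub>H\<^esub> inc c)
    = (stable e \<otimes>\<^bsub>H\<^esub> inc c \<otimes>\<^bsub>H\<^esub> stable (\<not> e)) \<otimes>\<^bsub>H\<^esub> inc g1 \<otimes>\<^bsub>H\<^esub> word_class (syllable_word M)"
    using assms(2-4) by (simp add: H.m_assoc)
  also have "\<dots> = word_class (nf_word (assoc_iso e c \<otimes> g1, M))"
    using assms(2-4) assoc_iso_closed[OF c]
    by (simp add: stable_conj_assoc[OF c] word_class_nf_word inc_mult)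
  finally show ?thesis .
qed

lemma conj_cyclically_reduced_or_shorter:
  assumes h: "h \<in> carrier H" and len: "hnn_length h > 0"
  obtains y L where "y \<in> carrier H" "cyclically_reduced L" "syllables_closed L"
      "inv\<^bsub>H\<^esub> y \<otimes>\<^bsub>H\<^esub> h \<otimes>\<^bsub>H\<^esub> y = word_class (syllable_word L)"
    | y where "y \<in> carrier H" "hnn_length (inv\<^bsub>H\<^esub> y \<otimes>\<^bsub>H\<^esub> h \<otimes>\<^bsub>H\<^esub> y) < hnn_length h"
proof -
  obtain g0 L where nf: "normal_form (g0, L)" and h_nf: "h = word_class (nf_word (g0, L))"
    and len_h: "hnn_length h = length L"
    using normal_form_exists[OF h] by auto
  have g0: "g0 \<in> carrier G" and cL: "syllables_closed L" and rL: "reduced L"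
    using normal_formD[OF nf] nf_syllables_reduced by auto
  obtain BL e gn where L: "L = BL @ [(e, gn)]"
    using len len_h by (cases L rule: rev_cases) auto
  have gn: "gn \<in> carrier G" and cBL: "syllables_closed BL"
    using cL by (auto simp: L)
  define Lc where "Lc = BL @ [(e, gn \<otimes> g0)]"
  have h_Lc: "inv\<^bsub>H\<^esub> (inc g0) \<otimes>\<^bsub>H\<^esub> h \<otimes>\<^bsub>H\<^esub> inc g0 = word_class (syllable_word Lc)"
    using conj_rotate_nf_word[OF g0 gn cBL] by (simp add: h_nf L Lc_def)
  have rLc: "reduced Lc" and cLc: "syllables_closed Lc"
    using rL reduced_snoc_cong cBL gn g0 by (auto simp: L Lc_def)
  show thesis
  proof (cases "cyclically_reduced Lc")
    case True
    then show thesis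
      using that(1)[of "inc g0" Lc] g0 cLc h_Lc by simp
  next
    case False
    then obtain e1 g1 M where BL: "BL = (e1, g1) # M" and pinch: "pinch e (gn \<otimes> g0) e1"
      using rLc by (cases BL) (auto simp: cyclically_reduced_def Lc_def pinch_def)
    define z where "z = inv\<^bsub>H\<^esub> (stable e \<otimes>\<^bsub>H\<^esub> inc (gn \<otimes> g0))"
    define h' where "h' = word_class (nf_word (assoc_iso e (gn \<otimes> g0) \<otimes> g1, M))"
    have g1: "g1 \<in> carrier G" and cM: "syllables_closed M"
      using cBL by (auto simp: BL)
    have z: "z \<in> carrier H"
      using g0 gn by (simp add: z_def)
    have "inv\<^bsub>H\<^esub> (inc g0 \<otimes>\<^bsub>H\<^esub> z) \<otimes>\<^bsub>H\<^esub> h \<otimes>\<^bsub>H\<^esub> (inc g0 \<otimes>\<^bsub>H\<^esub> z)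
        = inv\<^bsub>H\<^esub> z \<otimes>\<^bsub>H\<^esub> word_class (syllable_word Lc) \<otimes>\<^bsub>H\<^esub> z"
      using h g0 z by (simp add: H.conj_mult h_Lc)
    also have "\<dots> = h'"
      using conj_cyclic_pinch[OF pinch g1 _ cM] g0 gn by (simp add: z_def h'_def Lc_def BL)
    finally have conj: "inv\<^bsub>H\<^esub> (inc g0 \<otimes>\<^bsub>H\<^esub> z) \<otimes>\<^bsub>H\<^esub> h \<otimes>\<^bsub>H\<^esub> (inc g0 \<otimes>\<^bsub>H\<^esub> z) = h'" .
    have "hnn_length h' \<le> length M"
      using hnn_length_le[OF nf_word_words] assoc_iso_closed g1 cM pinch
      by (simp add: h'_def stable_count_nf_word pinch_def)
    then have "hnn_length h' < hnn_length h"
      by (simp add: len_h L BL)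
    then show thesis
      using that(2)[of "inc g0 \<otimes>\<^bsub>H\<^esub> z"] conj g0 z by simp
  qed
qed

lemma elliptic_of_elliptic_power:
  assumes "h \<in> carrier H" and "0 < m" and "elliptic (h [^]\<^bsub>H\<^esub> (m::nat))"
  shows "elliptic h"
  using assms
proof (induction "hnn_length h" arbitrary: h rule: less_induct)
  case less
  have conj_power: "elliptic ((inv\<^bsub>H\<^esub> y \<otimes>\<^bsub>H\<^esub> h \<otimes>\<^bsub>H\<^esub> y) [^]\<^bsub>H\<^esub> m)" if "y \<in> carrier H" for y
    using less.prems(1,3) that by (simp add: H.conj_nat_pow elliptic_conj)
  show ?case
  proof (cases "hnn_length h = 0")
    case True
    then show ?thesis
      using hnn_length_zero_elliptic less.prems(1) by blast
  next
    case False
    then have "hnn_length h > 0"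
      by simp
    then show ?thesis
    proof (rule conj_cyclically_reduced_or_shorter[OF less.prems(1)])
      fix y L
      assume y: "y \<in> carrier H" and L: "cyclically_reduced L" "syllables_closed L"
        and "inv\<^bsub>H\<^esub> y \<otimes>\<^bsub>H\<^esub> h \<otimes>\<^bsub>H\<^esub> y = word_class (syllable_word L)"
      then have "elliptic (word_class (syllable_word L) [^]\<^bsub>H\<^esub> m)"
        using conj_power[OF y] by simp
      then show ?thesis
        using cyclically_reduced_not_elliptic_power[OF L less.prems(2)] by contradiction
    next
      fix y
      assume y: "y \<in> carrier H" and "hnn_length (inv\<^bsub>H\<^esub> y \<otimes>\<^bsub>H\<^esub> h \<otimes>\<^bsub>H\<^esub> y) < hnn_length h"
      then have "elliptic (inv\<^bsub>H\<^esub> y \<otimes>\<^bsub>H\<^esub> h \<otimes>\<^bsub>H\<^esub> y)"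
        using less.hyps less.prems(1,2) conj_power[OF y] y by simp
      then show ?thesis
        using elliptic_conj_iff[OF less.prems(1) y] by simp
    qed
  qed
qed

end

theorem corollary3p4:
  fixes G :: "('g, 'b) monoid_scheme" and A B :: "'g set" and \<phi> :: "'g \<Rightarrow> 'g" and g1 :: 'g
  assumes "group G" and "subgroup A G" and "subgroup B G"
    and "\<phi> \<in> iso (G\<lparr>carrier := A\<rparr>) (G\<lparr>carrier := B\<rparr>)"
    and "g1 \<in> carrier G"
    and "\<not> proper_power G g1"
  shows "proper_power (hnn_ext G A \<phi>) (hnn_inc G A \<phi> g1) \<longleftrightarrow>
    (\<exists>k::int. k \<ge> 2 \<and> (\<exists>g2\<in>carrier G. \<exists>x\<in>carrier (hnn_ext G A \<phi>).
       hnn_inc G A \<phi> g1 =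
         inv\<^bsub>hnn_ext G A \<phi>\<^esub> x \<otimes>\<^bsub>hnn_ext G A \<phi>\<^esub> hnn_inc G A \<phi> (g2 [^]\<^bsub>G\<^esub> k)
           \<otimes>\<^bsub>hnn_ext G A \<phi>\<^esub> x))"
proof -
  interpret hnn_extension G A B \<phi>
    using assms(1-4) by (simp add: hnn_extension_def hnn_extension_axioms_def)
  have g1: "g1 \<in> carrier G"
    by (rule assms(5))
  show ?thesis
    unfolding proper_power_def
  proof (intro iffI; elim bexE exE conjE)
    fix h and k :: int
    assume h: "h \<in> carrier H" and k: "k \<ge> 2" and g1_eq: "inc g1 = h [^]\<^bsub>H\<^esub> k"
    obtain n where n: "k = int n" "0 < n"
      using k by (intro that[of "nat k"]) simp_all
    have "elliptic (h [^]\<^bsub>H\<^esub> n)"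
      using elliptic_inc[OF g1] g1_eq by (simp add: n int_pow_int)
    then have "elliptic h"
      by (rule elliptic_of_elliptic_power[OF h n(2)])
    then obtain x g2 where x: "x \<in> carrier H" and g2: "g2 \<in> carrier G"
      and "h = inv\<^bsub>H\<^esub> x \<otimes>\<^bsub>H\<^esub> inc g2 \<otimes>\<^bsub>H\<^esub> x"
      by (auto simp: elliptic_def)
    then have "inc g1 = inv\<^bsub>H\<^esub> x \<otimes>\<^bsub>H\<^esub> inc (g2 [^]\<^bsub>G\<^esub> k) \<otimes>\<^bsub>H\<^esub> x"
      using g1_eq by (simp add: n int_pow_int conj_inc_nat_pow)
    then show "\<exists>k::int. k \<ge> 2 \<and> (\<exists>g2\<in>carrier G. \<exists>x\<in>carrier H.
        inc g1 = inv\<^bsub>H\<^esub> x \<otimes>\<^bsub>H\<^esub> inc (g2 [^]\<^bsub>G\<^esub> k) \<otimes>\<^bsub>H\<^esub> x)"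
      using k x g2 by (intro exI[of _ k] conjI bexI[of _ g2] bexI[of _ x])
  next
    fix k :: int and g2 x
    assume k: "k \<ge> 2" and g2: "g2 \<in> carrier G" and x: "x \<in> carrier H"
      and g1_eq: "inc g1 = inv\<^bsub>H\<^esub> x \<otimes>\<^bsub>H\<^esub> inc (g2 [^]\<^bsub>G\<^esub> k) \<otimes>\<^bsub>H\<^esub> x"
    obtain n where n: "k = int n"
      using k by (intro that[of "nat k"]) simp
    have "inc g1 = (inv\<^bsub>H\<^esub> x \<otimes>\<^bsub>H\<^esub> inc g2 \<otimes>\<^bsub>H\<^esub> x) [^]\<^bsub>H\<^esub> k"
      using g1_eq x g2 by (simp add: n int_pow_int conj_inc_nat_pow)
    then show "\<exists>h\<in>carrier H. \<exists>k::int. k \<ge> 2 \<and> inc g1 = h [^]\<^bsub>H\<^esub> k"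
      using k x g2
      by (intro bexI[of _ "inv\<^bsub>H\<^esub> x \<otimes>\<^bsub>H\<^esub> inc g2 \<otimes>\<^bsub>H\<^esub> x"] exI[of _ k] conjI) simp_all
  qed
qed

end
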